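(* Assume Martin's Axiom and $\mathfrak c=\aleph_2$. Let $n\ge1$. Then there exists a family $\{B_\xi:\xi<\mathfrak c\}$ of pairwise disjoint subsets of $\mathbb R^n$ such that (1) for every $\xi$, $\lambda_*(B_\xi)=0$ and $\lambda_*(\mathbb R^n\setminus B_\xi)=0$, (2) no $B_\xi$ is a $2$-covering, and (3) $\{B_\xi:\xi<\mathfrak c\}$ is a ${<}\mathfrak c$-S-covering (i.e. a ${<}\aleph_2$-S-covering).
   Context: $\mathfrak c=|\mathbb R|$; $\lambda_*$ is inner Lebesgue measure on $\mathbb R^n$. A set $A\subseteq\mathbb R^n$ is a $2$-covering if for every $C\subseteq\mathbb R^n$ with $|C|=2$ there is $x$ with $C+x\subseteq A$. A family $\mathcal A$ of pairwise disjoint subsets of $\mathbb R^n$ is a ${<}\kappa$-S-covering if for every $F\subseteq\mathbb R^n$ with $|F|<\kappa$ there is $t$ with $F+t\subseteq\bigcup\mathcal A$ and $|(F+t)\cap A|\le1$ for all $A\in\mathcal A$. *)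

theory Defs
  imports "HOL-Analysis.Analysis"
begin

definition continuum_is_aleph2 :: bool where
  "continuum_is_aleph2 \<longleftrightarrow>
     (card_of (UNIV :: real set), cardSuc (cardSuc natLeq)) \<in> ordIso"

definition compatible :: "'a set \<Rightarrow> ('a \<Rightarrow> 'a \<Rightarrow> bool) \<Rightarrow> 'a \<Rightarrow> 'a \<Rightarrow> bool" where
  "compatible P le p q \<longleftrightarrow> (\<exists>r\<in>P. le r p \<and> le r q)"

definition antichain :: "'a set \<Rightarrow> ('a \<Rightarrow> 'a \<Rightarrow> bool) \<Rightarrow> 'a set \<Rightarrow> bool" where
  "antichain P le A \<longleftrightarrow> A \<subseteq> P \<and> (\<forall>p\<in>A. \<forall>q\<in>A. p \<noteq> q \<longrightarrow> \<not> compatible P le p q)"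

definition ccc_poset :: "'a set \<Rightarrow> ('a \<Rightarrow> 'a \<Rightarrow> bool) \<Rightarrow> bool" where
  "ccc_poset P le \<longleftrightarrow> P \<noteq> {}
     \<and> (\<forall>p\<in>P. le p p)
     \<and> (\<forall>p\<in>P. \<forall>q\<in>P. le p q \<and> le q p \<longrightarrow> p = q)
     \<and> (\<forall>p\<in>P. \<forall>q\<in>P. \<forall>r\<in>P. le p q \<and> le q r \<longrightarrow> le p r)
     \<and> (\<forall>A. antichain P le A \<longrightarrow> countable A)"

definition dense_in :: "'a set \<Rightarrow> ('a \<Rightarrow> 'a \<Rightarrow> bool) \<Rightarrow> 'a set \<Rightarrow> bool" where
  "dense_in P le D \<longleftrightarrow> D \<subseteq> P \<and> (\<forall>p\<in>P. \<exists>d\<in>D. le d p)"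

definition filter_in :: "'a set \<Rightarrow> ('a \<Rightarrow> 'a \<Rightarrow> bool) \<Rightarrow> 'a set \<Rightarrow> bool" where
  "filter_in P le G \<longleftrightarrow> G \<subseteq> P \<and> G \<noteq> {}
     \<and> (\<forall>p\<in>G. \<forall>q\<in>P. le p q \<longrightarrow> q \<in> G)
     \<and> (\<forall>p\<in>G. \<forall>q\<in>G. \<exists>r\<in>G. le r p \<and> le r q)"

text \<open>Posets are taken with
  carrier a subset of the type real set (so every poset of size at most 2^c is covered,
  in particular all posets of size less than c, which suffices for MA).\<close>
definition martins_axiom :: bool where
  "martins_axiom \<longleftrightarrow>
     (\<forall>(P :: real set set) le \<D>. ccc_poset P le \<and> (\<forall>D\<in>\<D>. dense_in P le D)
        \<and> (card_of \<D>, card_of (UNIV :: real set)) \<in> ordLess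
        \<longrightarrow> (\<exists>G. filter_in P le G \<and> (\<forall>D\<in>\<D>. G \<inter> D \<noteq> {})))"

definition inner_lebesgue :: "'a::euclidean_space set \<Rightarrow> ennreal" where
  "inner_lebesgue A = (SUP K \<in> {K \<in> sets lebesgue. K \<subseteq> A}. emeasure lebesgue K)"

definition two_covering :: "'a::ab_group_add set \<Rightarrow> bool" where
  "two_covering A \<longleftrightarrow> (\<forall>C. card C = 2 \<longrightarrow> (\<exists>x. (\<lambda>c. c + x) ` C \<subseteq> A))"

definition lt_S_covering :: "'a::ab_group_add set set \<Rightarrow> 'b rel \<Rightarrow> bool" where
  "lt_S_covering \<A> \<kappa> \<longleftrightarrow>
     (\<forall>A\<in>\<A>. \<forall>A'\<in>\<A>. A \<noteq> A' \<longrightarrow> A \<inter> A' = {})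
     \<and> (\<forall>F. (card_of F, \<kappa>) \<in> ordLess \<longrightarrow>
          (\<exists>t. (\<lambda>f. f + t) ` F \<subseteq> \<Union>\<A>
             \<and> (\<forall>A\<in>\<A>. \<forall>a\<in>(\<lambda>f. f + t) ` F \<inter> A. \<forall>b\<in>(\<lambda>f. f + t) ` F \<inter> A. a = b)))"

end

theory Submission
  imports Defs "HOL-Probability.Distribution_Functions"
begin

unbundle cardinal_syntax

text \<open>
  Under \<open>\<c> = \<aleph>\<^sub>2\<close> the continuum is a regular cardinal, so sets of size \<open>< \<c>\<close> (``small'' sets)
  are closed under unions of fewer than \<open>\<c>\<close> of them. Well-order \<open>\<real>\<^sup>n\<close> in type \<open>\<c>\<close>; by
  transfinite recursion translate its initial segments to pairwise disjoint small ``zones''.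
  Every small set lies in an initial segment, hence has a translate inside a single zone.
  A second recursion of length \<open>\<c>\<close> colours \<open>\<real>\<^sup>n\<close> by reals so that the colouring is injective
  on every zone, the points \<open>y\<close> and \<open>y + 1\<close> always get different colours, and every compact
  set of positive measure (which has \<open>\<c>\<close> points) receives every colour. The colour classes are
  the required sets.
\<close>

section \<open>Sets of size less than the continuum\<close>

definition small :: "'a set \<Rightarrow> bool" where
  "small A \<longleftrightarrow> |A| <o |UNIV :: real set|"

lemma small_subset: "small B \<Longrightarrow> A \<subseteq> B \<Longrightarrow> small A"
  unfolding small_def using card_of_mono1 ordLeq_ordLess_trans by blast

lemma small_image: "small A \<Longrightarrow> small (f ` A)"
  unfolding small_def using card_of_image ordLeq_ordLess_trans by blast

lemma small_Un: "small A \<Longrightarrow> small B \<Longrightarrow> small (A \<union> B)"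
  unfolding small_def
  by (metis Field_card_of card_of_Card_order card_of_Un_ordLess_infinite_Field infinite_UNIV_char_0)

lemma countable_imp_small: "countable A \<Longrightarrow> small A"
proof -
  assume "countable A"
  then have "|A| \<le>o |UNIV :: nat set|"
    unfolding countable_def using card_of_ordLeq by blast
  moreover have "\<not> |UNIV :: real set| \<le>o |UNIV :: nat set|"
  proof
    assume "|UNIV :: real set| \<le>o |UNIV :: nat set|"
    then obtain f :: "real \<Rightarrow> nat" where "inj f"
      using card_of_ordLeq[of "UNIV :: real set" "UNIV :: nat set"] by auto
    then show False using uncountable_UNIV_real unfolding countable_def by blast
  qed
  then have "|UNIV :: nat set| <o |UNIV :: real set|"
    by (simp add: card_of_Well_order not_ordLeq_iff_ordLess)
  ultimately show ?thesis unfolding small_def using ordLeq_ordLess_trans by blast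
qed

lemma finite_imp_small: "finite A \<Longrightarrow> small A"
  by (simp add: countable_imp_small countable_finite)

lemma small_insert: "small A \<Longrightarrow> small (insert a A)"
  using small_Un[of "{a}" A] finite_imp_small[of "{a}"] by simp

lemma not_small_interval:
  fixes a b :: real
  assumes "a < b" "{a<..<b} \<subseteq> S"
  shows "\<not> small S"
proof -
  have "S \<approx> (UNIV :: real set)" using assms(2) by (intro eqpoll_real_subset[OF assms(1)]) auto
  then have "|UNIV :: real set| \<le>o |S|"
    using eqpoll_iff_card_of_ordIso ordIso_iff_ordLeq by blast
  then show ?thesis unfolding small_def using not_ordLess_ordLeq by blast
qed

text \<open>\<open>|UNIV :: real set|\<close> is a well-order of \<open>\<real>\<close> of order type \<open>\<c>\<close>; the transfinite
  constructions below run along it.\<close>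

abbreviation below :: "real \<Rightarrow> real set" where
  "below \<beta> \<equiv> underS |UNIV :: real set| \<beta>"

lemma small_below: "small (below \<beta>)"
  unfolding small_def by (rule card_of_underS) (simp_all add: card_of_card_order_on Field_card_of)

lemma below_total: "\<alpha> \<noteq> \<beta> \<Longrightarrow> \<alpha> \<in> below \<beta> \<or> \<beta> \<in> below \<alpha>"
  using wo_rel.TOTALS[of "|UNIV :: real set|"] card_of_well_order_on[of "UNIV :: real set"]
  by (auto simp: wo_rel_def underS_def Field_card_of)

locale regular_continuum =
  assumes stable_continuum: "stable |UNIV :: real set|"
begin

lemma small_UN: "small I \<Longrightarrow> (\<And>i. i \<in> I \<Longrightarrow> small (F i)) \<Longrightarrow> small (\<Union>i\<in>I. F i)"
  unfolding small_def using stable_continuum stable_UNION by blast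

lemma small_Times: "small A \<Longrightarrow> small B \<Longrightarrow> small (A \<times> B)"
  unfolding small_def using stable_continuum stable_elim[of _ A "\<lambda>_. B"] by blast

lemma small_bounded:
  assumes "small X"
  shows "\<exists>\<beta>. X \<subseteq> below \<beta>"
proof (rule ccontr)
  assume "\<nexists>\<beta>. X \<subseteq> below \<beta>"
  have "UNIV \<subseteq> (\<Union>x\<in>X. {x} \<union> below x)"
  proof
    fix b :: real
    obtain x where "x \<in> X" "x \<notin> below b" using \<open>\<nexists>\<beta>. X \<subseteq> below \<beta>\<close> by blast
    then show "b \<in> (\<Union>x\<in>X. {x} \<union> below x)" using below_total[of x b] by blast
  qed
  moreover have "small (\<Union>x\<in>X. {x} \<union> below x)"
    by (rule small_UN[OF assms]) (auto intro: small_insert small_below)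
  moreover have "\<not> small (UNIV :: real set)"
    using not_small_interval[of 0 1] by simp
  ultimately show False
    using small_subset by blast
qed

end

lemma regular_continuum_if_aleph2:
  assumes "continuum_is_aleph2"
  shows "regular_continuum"
proof
  have "Card_order natLeq" "\<not> finite (Field natLeq)"
    by (rule natLeq_Card_order) (simp add: Field_natLeq)
  then have aleph1: "Card_order (cardSuc natLeq)" "\<not> finite (Field (cardSuc natLeq))"
    by (simp_all add: cardSuc_Card_order cardSuc_finite)
  then have "Card_order (cardSuc (cardSuc natLeq))" "\<not> finite (Field (cardSuc (cardSuc natLeq)))"
    by (simp_all add: cardSuc_Card_order cardSuc_finite)
  moreover have "regularCard (cardSuc (cardSuc natLeq))"
    using infinite_cardSuc_regularCard[OF aleph1(2,1)] .
  ultimately have "stable (cardSuc (cardSuc natLeq))"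
    by (rule regularCard_stable)
  then show "stable |UNIV :: real set|"
    using assms stable_ordIso1 unfolding continuum_is_aleph2_def by blast
qed

section \<open>Transfinite constructions of length continuum\<close>

lemma transfinite_choice:
  fixes P :: "'i \<Rightarrow> ('i \<Rightarrow> 'a) \<Rightarrow> 'a \<Rightarrow> bool"
  assumes ex: "\<And>i g. \<exists>v. P i g v"
    and local: "\<And>i g g' v. P i g v \<Longrightarrow> (\<And>j. j \<in> underS |UNIV :: 'i set| i \<Longrightarrow> g j = g' j) \<Longrightarrow> P i g' v"
  shows "\<exists>x. \<forall>i. P i x (x i)"
proof -
  let ?R = "|UNIV :: 'i set| - Id"
  have wf: "wf ?R"
    using wo_rel.WF card_of_Well_order wo_rel_def by blast
  define x where "x = wfrec ?R (\<lambda>g i. SOME v. P i g v)"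
  have "P i x (x i)" for i
  proof -
    have "x i = (SOME v. P i (cut x ?R i) v)"
      unfolding x_def by (subst wfrec[OF wf]) simp
    then have "P i (cut x ?R i) (x i)"
      using someI_ex[OF ex] by simp
    moreover have "cut x ?R i j = x j" if "j \<in> underS |UNIV :: 'i set| i" for j
      using that by (simp add: cut_apply underS_def)
    ultimately show ?thesis by (rule local)
  qed
  then show ?thesis by blast
qed

context regular_continuum
begin

lemma disjoint_translates:
  fixes A :: "real \<Rightarrow> 'a::ab_group_add set"
  assumes small_A: "\<And>\<beta>. small (A \<beta>)" and large: "\<not> small (UNIV :: 'a set)"
  obtains t where "disjoint_family (\<lambda>\<beta>. (\<lambda>a. a + t \<beta>) ` A \<beta>)"
proof -
  define D where "D \<beta> g = (\<Union>\<beta>'\<in>below \<beta>. (\<lambda>(a', a). a' + g \<beta>' - a) ` (A \<beta>' \<times> A \<beta>))"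
    for \<beta> and g :: "real \<Rightarrow> 'a"
  have "\<exists>t. \<forall>\<beta>. t \<beta> \<notin> D \<beta> t"
  proof (rule transfinite_choice[where P = "\<lambda>\<beta> g v. v \<notin> D \<beta> g"])
    fix \<beta> g
    have "small (D \<beta> g)"
      unfolding D_def by (intro small_UN small_below small_image small_Times small_A)
    then show "\<exists>v. v \<notin> D \<beta> g"
      using large small_subset by blast
  next
    fix \<beta> g g' v
    assume "v \<notin> D \<beta> g" and "\<And>\<beta>'. \<beta>' \<in> below \<beta> \<Longrightarrow> g \<beta>' = g' \<beta>'"
    moreover from this(2) have "D \<beta> g = D \<beta> g'"
      unfolding D_def by (intro SUP_cong refl) auto
    ultimately show "v \<notin> D \<beta> g'" by simp
  qed
  then obtain t where t: "\<And>\<beta>. t \<beta> \<notin> D \<beta> t" by blast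
  have clash: "False"
    if "\<beta>' \<in> below \<beta>" "a + t \<beta> = a' + t \<beta>'" "a \<in> A \<beta>" "a' \<in> A \<beta>'" for \<beta> \<beta>' a a'
  proof -
    have "t \<beta> = a' + t \<beta>' - a" using that(2) by (simp add: algebra_simps)
    then have "t \<beta> \<in> D \<beta> t" unfolding D_def using that by force
    then show False using t by blast
  qed
  have "(\<lambda>a. a + t \<beta>) ` A \<beta> \<inter> (\<lambda>a. a + t \<beta>') ` A \<beta>' = {}" if "\<beta> \<noteq> \<beta>'" for \<beta> \<beta>'
  proof -
    have "a + t \<beta> \<noteq> a' + t \<beta>'" if "a \<in> A \<beta>" "a' \<in> A \<beta>'" for a a'
      using below_total[OF \<open>\<beta> \<noteq> \<beta>'\<close>] clash[of \<beta> \<beta>' a' a] clash[of \<beta>' \<beta> a a'] that by auto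
    then show ?thesis by blast
  qed
  then have "disjoint_family (\<lambda>\<beta>. (\<lambda>a. a + t \<beta>) ` A \<beta>)"
    unfolding disjoint_family_on_def by blast
  then show ?thesis by (rule that)
qed

lemma small_exhaustion:
  assumes "|UNIV :: 'a set| \<le>o |UNIV :: real set|"
  obtains A :: "real \<Rightarrow> 'a set" where "\<And>\<beta>. small (A \<beta>)" and "\<And>F. small F \<Longrightarrow> \<exists>\<beta>. F \<subseteq> A \<beta>"
proof -
  obtain \<rho> :: "'a \<Rightarrow> real" where \<rho>: "inj \<rho>"
    using assms card_of_ordLeq[of "UNIV :: 'a set" "UNIV :: real set"] by auto
  show ?thesis
  proof (rule that[of "\<lambda>\<beta>. \<rho> -` below \<beta>"])
    fix \<beta>
    have "\<rho> -` below \<beta> \<subseteq> inv \<rho> ` below \<beta>" using \<rho> by (force simp: inv_f_f)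
    then show "small (\<rho> -` below \<beta>)" using small_subset small_image small_below by blast
  next
    fix F :: "'a set"
    assume "small F"
    then obtain \<beta> where "\<rho> ` F \<subseteq> below \<beta>" using small_bounded small_image by blast
    then show "\<exists>\<beta>. F \<subseteq> \<rho> -` below \<beta>" by blast
  qed
qed

lemma translation_zones:
  assumes "|UNIV :: 'a::ab_group_add set| \<le>o |UNIV :: real set|" and "\<not> small (UNIV :: 'a set)"
  obtains Z :: "real \<Rightarrow> 'a::ab_group_add set" where "\<And>\<beta>. small (Z \<beta>)" and "disjoint_family Z"
    and "\<And>F. small F \<Longrightarrow> \<exists>\<beta> t. (\<lambda>f. f + t) ` F \<subseteq> Z \<beta>"
proof -
  obtain A :: "real \<Rightarrow> 'a set" where small_A: "\<And>\<beta>. small (A \<beta>)"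
    and exhaust: "\<And>F. small F \<Longrightarrow> \<exists>\<beta>. F \<subseteq> A \<beta>"
    using small_exhaustion[OF assms(1)] by blast
  obtain t where disj: "disjoint_family (\<lambda>\<beta>. (\<lambda>a. a + t \<beta>) ` A \<beta>)"
    using disjoint_translates[where A = A, OF small_A assms(2)] by blast
  show ?thesis
  proof (rule that[of "\<lambda>\<beta>. (\<lambda>a. a + t \<beta>) ` A \<beta>"])
    show "small ((\<lambda>a. a + t \<beta>) ` A \<beta>)" for \<beta>
      using small_A by (rule small_image)
    show "disjoint_family (\<lambda>\<beta>. (\<lambda>a. a + t \<beta>) ` A \<beta>)"
      by (fact disj)
  next
    fix F :: "'a set"
    assume "small F"
    then obtain \<beta> where "F \<subseteq> A \<beta>" using exhaust by blast
    then have "(\<lambda>f. f + t \<beta>) ` F \<subseteq> (\<lambda>a. a + t \<beta>) ` A \<beta>" by blast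
    then show "\<exists>\<beta> t'. (\<lambda>f. f + t') ` F \<subseteq> (\<lambda>a. a + t \<beta>) ` A \<beta>" by blast
  qed
qed

lemma recursive_representatives:
  fixes adj :: "'a \<Rightarrow> 'a \<Rightarrow> bool" and \<rho> :: "'a \<Rightarrow> real"
    and S :: "real \<Rightarrow> 'a set" and c :: "real \<Rightarrow> real"
  assumes \<rho>: "inj \<rho>" and small_adj: "\<And>u. small {v. adj u v}" and large: "\<And>i. \<not> small (S i)"
  obtains x where "\<And>i. x i \<in> S i" and "\<And>i u. \<rho> u = c i \<Longrightarrow> \<not> adj u (x i)"
    and "\<And>i j. j \<in> below i \<Longrightarrow> x i \<noteq> x j"
    and "\<And>i j. j \<in> below i \<Longrightarrow> c j = c i \<Longrightarrow> \<not> adj (x j) (x i)"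
proof -
  define Forb where "Forb i g = {v. \<exists>u. \<rho> u = c i \<and> adj u v} \<union> g ` below i
      \<union> (\<Union>j\<in>{j \<in> below i. c j = c i}. {v. adj (g j) v})"
    for i and g :: "real \<Rightarrow> 'a"
  have "\<exists>x. \<forall>i. x i \<in> S i - Forb i x"
  proof (rule transfinite_choice[where P = "\<lambda>i g v. v \<in> S i - Forb i g"])
    fix i g
    have "{v. \<exists>u. \<rho> u = c i \<and> adj u v} \<subseteq> {v. adj (inv \<rho> (c i)) v}"
    proof
      fix v assume "v \<in> {v. \<exists>u. \<rho> u = c i \<and> adj u v}"
      then obtain u where "\<rho> u = c i" "adj u v" by blast
      then show "v \<in> {v. adj (inv \<rho> (c i)) v}" using inv_f_f[OF \<rho>, of u] by simp
    qed
    then have small_fresh: "small {v. \<exists>u. \<rho> u = c i \<and> adj u v}"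
      by (rule small_subset[OF small_adj])
    have small_same: "small {j \<in> below i. c j = c i}"
      by (rule small_subset[OF small_below]) blast
    have "small (Forb i g)"
      unfolding Forb_def
      by (intro small_Un small_image small_below small_UN[OF small_same] small_adj small_fresh)
    then show "\<exists>v. v \<in> S i - Forb i g"
      using large small_subset by blast
  next
    fix i g g' v
    assume "v \<in> S i - Forb i g" and "\<And>j. j \<in> below i \<Longrightarrow> g j = g' j"
    moreover from this(2) have "Forb i g = Forb i g'"
      unfolding Forb_def by (intro arg_cong2[where f = "(\<union>)"] image_cong SUP_cong refl) auto
    ultimately show "v \<in> S i - Forb i g'" by simp
  qed
  then obtain x where x: "\<And>i. x i \<in> S i - Forb i x" by blast
  show ?thesis
  proof (rule that[of x])
    show "x i \<in> S i" for i
      using x[of i] by blast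
    show "\<not> adj u (x i)" if "\<rho> u = c i" for i u
      using x[of i] that unfolding Forb_def by blast
    show "x i \<noteq> x j" if "j \<in> below i" for i j
      using x[of i] that unfolding Forb_def by blast
    show "\<not> adj (x j) (x i)" if "j \<in> below i" "c j = c i" for i j
      using x[of i] that unfolding Forb_def by blast
  qed
qed

lemma separated_representatives:
  fixes adj :: "'a \<Rightarrow> 'a \<Rightarrow> bool" and \<rho> :: "'a \<Rightarrow> real"
    and S :: "real \<Rightarrow> 'a set" and c :: "real \<Rightarrow> real"
  assumes \<rho>: "inj \<rho>" and sym: "symp adj" and small_adj: "\<And>u. small {v. adj u v}"
    and large: "\<And>i. \<not> small (S i)"
  obtains x where "\<And>i. x i \<in> S i" and "\<And>i u. \<rho> u = c i \<Longrightarrow> \<not> adj u (x i)"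
    and "\<And>i j. i \<noteq> j \<Longrightarrow> x i \<noteq> x j"
    and "\<And>i j. i \<noteq> j \<Longrightarrow> c i = c j \<Longrightarrow> \<not> adj (x i) (x j)"
proof -
  obtain x where x: "\<And>i. x i \<in> S i" and fresh: "\<And>i u. \<rho> u = c i \<Longrightarrow> \<not> adj u (x i)"
    and earlier_distinct: "\<And>i j. j \<in> below i \<Longrightarrow> x i \<noteq> x j"
    and earlier_apart: "\<And>i j. j \<in> below i \<Longrightarrow> c j = c i \<Longrightarrow> \<not> adj (x j) (x i)"
    using recursive_representatives[where adj = adj and S = S and c = c, OF \<rho> small_adj large]
    by blast
  have sep: "x i \<noteq> x j \<and> (c i = c j \<longrightarrow> \<not> adj (x i) (x j))" if "i \<noteq> j" for i j
    using below_total[OF that]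
  proof
    assume "i \<in> below j"
    then show ?thesis
      using earlier_distinct[where i = j and j = i] earlier_apart[where i = j and j = i] by auto
  next
    assume "j \<in> below i"
    then show ?thesis
      using earlier_distinct[where i = i and j = j] earlier_apart[where i = i and j = j]
        sympD[OF sym, of "x i" "x j"] by auto
  qed
  show ?thesis
    by (rule that[of x]) (use x fresh sep in blast)+
qed

lemma proper_colouring_hitting:
  fixes adj :: "'a \<Rightarrow> 'a \<Rightarrow> bool" and S :: "real \<Rightarrow> 'a set" and c :: "real \<Rightarrow> real"
  assumes card: "|UNIV :: 'a set| \<le>o |UNIV :: real set|"
    and sym: "symp adj" and small_adj: "\<And>u. small {v. adj u v}" and large: "\<And>i. \<not> small (S i)"
  obtains col :: "'a \<Rightarrow> real" where "\<And>u v. adj u v \<Longrightarrow> u \<noteq> v \<Longrightarrow> col u \<noteq> col v"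
    and "\<And>i. \<exists>y\<in>S i. col y = c i"
proof -
  obtain \<rho> :: "'a \<Rightarrow> real" where \<rho>: "inj \<rho>"
    using card card_of_ordLeq[of "UNIV :: 'a set" "UNIV :: real set"] by auto
  obtain x where x: "\<And>i. x i \<in> S i" and fresh: "\<And>i u. \<rho> u = c i \<Longrightarrow> \<not> adj u (x i)"
    and distinct: "\<And>i j. i \<noteq> j \<Longrightarrow> x i \<noteq> x j"
    and apart: "\<And>i j. i \<noteq> j \<Longrightarrow> c i = c j \<Longrightarrow> \<not> adj (x i) (x j)"
    using separated_representatives[where adj = adj and S = S and c = c, OF \<rho> sym small_adj large]
    by blast
  have "inj x" using distinct unfolding inj_def by blast
  \<comment> \<open>Points that are not chosen keep the injective default colour \<open>\<rho>\<close>.\<close>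
  define col where "col y = (if y \<in> range x then c (inv x y) else \<rho> y)" for y
  have col_x: "col (x i) = c i" for i
    using \<open>inj x\<close> by (simp add: col_def)
  have col_default: "col y = \<rho> y" if "y \<notin> range x" for y
    using that by (simp add: col_def)
  show ?thesis
  proof (rule that[of col])
    fix u v
    assume uv: "adj u v" "u \<noteq> v"
    show "col u \<noteq> col v"
    proof (cases "u \<in> range x"; cases "v \<in> range x")
      assume "u \<in> range x" "v \<in> range x"
      then obtain i j where "u = x i" "v = x j" by blast
      then show ?thesis using uv apart[of i j] col_x by auto
    next
      assume "u \<in> range x" "v \<notin> range x"
      then obtain i where "u = x i" by blast
      then show ?thesis
        using fresh[where u = v and i = i] sympD[OF sym uv(1)] col_x col_default[OF \<open>v \<notin> range x\<close>]
        by auto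
    next
      assume "u \<notin> range x" "v \<in> range x"
      then obtain j where "v = x j" by blast
      then show ?thesis
        using uv fresh[where u = u and i = j] col_x col_default[OF \<open>u \<notin> range x\<close>] by auto
    next
      assume "u \<notin> range x" "v \<notin> range x"
      then show ?thesis using uv \<rho> col_default by (simp add: inj_eq)
    qed
  next
    show "\<exists>y\<in>S i. col y = c i" for i
      using x col_x by blast
  qed
qed

lemma small_zone_of_point:
  fixes Z :: "'i \<Rightarrow> 'a set"
  assumes small_Z: "\<And>\<beta>. small (Z \<beta>)" and disj: "disjoint_family Z"
  shows "small (\<Union>\<beta>\<in>{\<beta>. u \<in> Z \<beta>}. Z \<beta>)"
proof -
  have "{\<beta>. u \<in> Z \<beta>} \<subseteq> {SOME \<beta>. u \<in> Z \<beta>}"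
  proof
    fix \<beta> assume "\<beta> \<in> {\<beta>. u \<in> Z \<beta>}"
    then have "u \<in> Z \<beta>" "u \<in> Z (SOME \<beta>. u \<in> Z \<beta>)" by (auto intro: someI)
    then show "\<beta> \<in> {SOME \<beta>. u \<in> Z \<beta>}" using disj unfolding disjoint_family_on_def by blast
  qed
  then have "small {\<beta>. u \<in> Z \<beta>}"
    by (meson finite.emptyI finite.insertI finite_imp_small small_subset)
  then show ?thesis by (rule small_UN) (rule small_Z)
qed

lemma colouring_injective_on_zones:
  fixes e :: "'a::ab_group_add" and Z :: "real \<Rightarrow> 'a set"
    and S :: "real \<Rightarrow> 'a set" and c :: "real \<Rightarrow> real"
  assumes e: "e \<noteq> 0" and card: "|UNIV :: 'a set| \<le>o |UNIV :: real set|"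
    and small_Z: "\<And>\<beta>. small (Z \<beta>)" and disj: "disjoint_family Z"
    and large: "\<And>i. \<not> small (S i)"
  obtains col :: "'a::ab_group_add \<Rightarrow> real" where "\<And>\<beta>. inj_on col (Z \<beta>)" and "\<And>y. col (y + e) \<noteq> col y"
    and "\<And>i. \<exists>y\<in>S i. col y = c i"
proof -
  define adj where "adj u v \<longleftrightarrow> (\<exists>\<beta>. u \<in> Z \<beta> \<and> v \<in> Z \<beta>) \<or> v = u + e \<or> u = v + e" for u v
  have sym: "symp adj" unfolding adj_def symp_def by blast
  have small_adj: "small {v. adj u v}" for u
  proof -
    have "small ((\<Union>\<beta>\<in>{\<beta>. u \<in> Z \<beta>}. Z \<beta>) \<union> {u + e, u - e})"
      by (intro small_Un small_zone_of_point[OF small_Z disj]) (simp add: finite_imp_small)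
    moreover have "{v. adj u v} \<subseteq> (\<Union>\<beta>\<in>{\<beta>. u \<in> Z \<beta>}. Z \<beta>) \<union> {u + e, u - e}"
      unfolding adj_def by (auto simp: algebra_simps)
    ultimately show ?thesis using small_subset by blast
  qed
  obtain col :: "'a \<Rightarrow> real" where proper: "\<And>u v. adj u v \<Longrightarrow> u \<noteq> v \<Longrightarrow> col u \<noteq> col v"
    and meets: "\<And>i. \<exists>y\<in>S i. col y = c i"
    using proper_colouring_hitting[where adj = adj and S = S and c = c, OF card sym small_adj large] by blast
  show ?thesis
  proof (rule that[of col])
    show "inj_on col (Z \<beta>)" for \<beta>
      using proper unfolding inj_on_def adj_def by blast
    show "col (y + e) \<noteq> col y" for y
      using proper[of "y + e" y] e by (simp add: adj_def)
  qed (fact meets)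
qed

end

section \<open>Compact sets of positive measure\<close>

lemma (in finite_borel_measure) not_small_closed_support:
  assumes atomless: "\<And>s. measure M {s} = 0"
    and C: "closed C" "measure M (- C) = 0"
    and pos: "0 < measure M (space M)"
  shows "\<not> small C"
proof -
  have onto: "\<exists>s. cdf M s = y" if "0 < y" "y < measure M (space M)" for y
  proof -
    obtain a where a: "cdf M a < y"
      using order_tendstoD(2)[OF cdf_lim_at_bot \<open>0 < y\<close>]
      by (metis eventually_at_bot_linorder order.refl)
    obtain b where b: "y < cdf M b"
      using order_tendstoD(1)[OF cdf_lim_at_top \<open>y < _\<close>]
      by (metis eventually_at_top_linorder order.refl)
    have "a \<le> b" using a b cdf_nondecreasing[of b a] by linarith
    moreover have "continuous_on {a..b} (cdf M)"
      using atomless isCont_cdf by (simp add: continuous_at_imp_continuous_on)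
    ultimately show ?thesis using IVT'[of "cdf M" a y b] a b by auto
  qed
  \<comment> \<open>Off \<open>C\<close> the distribution function is locally constant, so there it only takes values at rationals.\<close>
  have rational_value: "\<exists>q\<in>\<rat>. cdf M q = cdf M s" if "s \<notin> C" for s
  proof -
    obtain e where "e > 0" "ball s e \<subseteq> - C"
      using openE[OF open_Compl[OF C(1)], of s] \<open>s \<notin> C\<close> by blast
    moreover obtain q where q: "q \<in> \<rat>" "s < q" "q < s + e"
      using Rats_dense_in_real[of s "s + e"] \<open>e > 0\<close> by auto
    ultimately have "{s<..q} \<subseteq> - C" by (auto simp: dist_real_def subset_eq)
    have "cdf M q - cdf M s = measure M {s<..q}" using cdf_diff_eq q by blast
    also have "\<dots> \<le> measure M (- C)"
      using \<open>{s<..q} \<subseteq> - C\<close> C(1) by (intro finite_measure_mono sets_M borel_open open_Compl)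
    finally show ?thesis using C(2) cdf_nondecreasing[of s q] q by force
  qed
  have "{0<..<measure M (space M)} \<subseteq> cdf M ` C \<union> cdf M ` \<rat>"
  proof
    fix y assume "y \<in> {0<..<measure M (space M)}"
    then obtain s where s: "cdf M s = y" using onto by auto
    show "y \<in> cdf M ` C \<union> cdf M ` \<rat>"
    proof (cases "s \<in> C")
      case True
      then show ?thesis using s by blast
    next
      case False
      then obtain q where "q \<in> \<rat>" "cdf M q = cdf M s" using rational_value by blast
      then show ?thesis using s by (metis UnI2 rev_image_eqI)
    qed
  qed
  moreover have "small (cdf M ` C \<union> cdf M ` \<rat>)" if "small C"
    using small_Un[OF small_image[OF that] small_image[OF countable_imp_small[OF countable_rat]]] .
  ultimately show ?thesis
    using not_small_interval[OF pos] by blast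
qed

lemma compact_positive_measure_not_small:
  fixes K :: "'a::euclidean_space set"
  assumes K: "compact K" and pos: "0 < emeasure lebesgue K"
  shows "\<not> small K"
proof -
  obtain b :: 'a where "b \<in> Basis" using nonempty_Basis by blast
  define \<pi> where "\<pi> x = x \<bullet> b" for x
  define M where "M = distr (lebesgue_on K) borel \<pi>"
  have K_fin: "K \<in> fmeasurable lebesgue" using lmeasurable_compact[OF K] .
  then have K_meas: "K \<in> sets lebesgue" by (simp add: fmeasurable_def)
  have cont: "continuous_on UNIV \<pi>" unfolding \<pi>_def by (intro continuous_intros)
  then have "\<pi> \<in> borel_measurable (lebesgue_on K)"
    using continuous_imp_measurable_on_sets_lebesgue K_meas continuous_on_subset by blast
  then have measure_M: "measure M A = measure lebesgue (\<pi> -` A \<inter> K)" if "A \<in> sets borel" for A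
    using that K_meas
    by (simp add: M_def measure_distr measure_restrict_space space_restrict_space)
  have "finite_measure M"
    using K_fin by (intro finite_measureI)
      (simp add: M_def emeasure_distr \<open>\<pi> \<in> _\<close> emeasure_restrict_space K_meas space_restrict_space
        fmeasurable_def)
  then interpret finite_borel_measure M
    by (simp add: finite_borel_measure_def finite_borel_measure_axioms_def M_def)
  have "measure M {s} = 0" for s
  proof -
    have "negligible (\<pi> -` {s} \<inter> K)"
      by (rule negligible_subset[OF negligible_standard_hyperplane[OF \<open>b \<in> Basis\<close>, of s]])
        (auto simp: \<pi>_def inner_commute)
    then show ?thesis using measure_M negligible_imp_measure0 by simp
  qed
  moreover have "closed (\<pi> ` K)"
    using compact_continuous_image[OF continuous_on_subset[OF cont] K] compact_imp_closed by blast
  moreover have "measure M (- \<pi> ` K) = 0"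
  proof -
    have "- \<pi> ` K \<in> sets borel"
      using \<open>closed (\<pi> ` K)\<close> by (intro borel_open open_Compl)
    moreover have "\<pi> -` (- \<pi> ` K) \<inter> K = {}" by auto
    ultimately show ?thesis using measure_M[of "- \<pi> ` K"] by simp
  qed
  moreover have "0 < measure M (space M)"
    using measure_M[of UNIV] pos K_fin by (simp add: M_def emeasure_eq_measure2)
  ultimately have "\<not> small (\<pi> ` K)" by (rule not_small_closed_support)
  then show ?thesis using small_image by blast
qed

lemma emeasure_lebesgue_unit_cube: "emeasure lebesgue (cbox 0 (One :: 'a::euclidean_space)) = 1"
  by (simp add: emeasure_lborel_cbox_eq)

lemma not_small_UNIV: "\<not> small (UNIV :: 'a::euclidean_space set)"
proof
  assume "small (UNIV :: 'a set)"
  then have "small (cbox 0 (One :: 'a))" using small_subset by blast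
  then show False
    using compact_positive_measure_not_small[of "cbox 0 (One :: 'a)"]
    by (simp add: emeasure_lebesgue_unit_cube)
qed

lemma positive_measure_contains_compact:
  fixes S :: "'a::euclidean_space set"
  assumes S: "S \<in> sets lebesgue" and pos: "0 < emeasure lebesgue S"
  obtains K where "compact K" "K \<subseteq> S" "0 < emeasure lebesgue K"
proof -
  obtain N C where N: "negligible N" and C: "\<And>n::nat. compact (C n)" and S_eq: "S = (\<Union>n. C n) \<union> N"
    using lebesgue_regular_inner[OF S] by metis
  have "\<exists>n. 0 < emeasure lebesgue (C n)"
  proof (rule ccontr)
    assume "\<nexists>n. 0 < emeasure lebesgue (C n)"
    then have "C n \<in> null_sets lebesgue" for n
      using C lmeasurable_compact by (auto simp: null_sets_def fmeasurable_def)
    moreover have "N \<in> null_sets lebesgue"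
      using N negligible_iff_null_sets negligible_imp_sets by blast
    ultimately have "S \<in> null_sets lebesgue" unfolding S_eq by auto
    then show False using pos by auto
  qed
  then show ?thesis using that C S_eq by blast
qed

lemma inner_lebesgue_eq_0I:
  fixes T :: "'a::euclidean_space set"
  assumes "\<And>K. compact K \<Longrightarrow> 0 < emeasure lebesgue K \<Longrightarrow> \<not> K \<subseteq> T"
  shows "inner_lebesgue T = 0"
proof -
  have null: "emeasure lebesgue A = 0" if A: "A \<in> sets lebesgue" "A \<subseteq> T" for A
  proof (rule ccontr)
    assume "emeasure lebesgue A \<noteq> 0"
    then have "0 < emeasure lebesgue A" using not_gr_zero by blast
    then obtain K where "compact K" "K \<subseteq> A" "0 < emeasure lebesgue K"
      by (rule positive_measure_contains_compact[OF A(1)])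
    then show False using assms A(2) by blast
  qed
  have "inner_lebesgue T \<le> 0"
    unfolding inner_lebesgue_def
  proof (rule SUP_least)
    fix A assume "A \<in> {K \<in> sets lebesgue. K \<subseteq> T}"
    then show "emeasure lebesgue A \<le> 0" using null by simp
  qed
  then show ?thesis by simp
qed

lemma card_closed_le_continuum:
  "|{S :: 'a::second_countable_topology set. closed S}| \<le>o |UNIV :: real set|"
proof -
  obtain \<B> :: "'a set set" where "countable \<B>" and "\<And>U. U \<in> \<B> \<Longrightarrow> open U"
    and basis: "\<And>S. open S \<Longrightarrow> \<exists>\<U>\<subseteq>\<B>. S = \<Union>\<U>"
    using univ_second_countable by blast
  \<comment> \<open>A closed set is determined by the basic open sets inside its complement.\<close>
  define code where "code S = to_nat_on \<B> ` {U \<in> \<B>. U \<subseteq> - S}" for S :: "'a set"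
  have closed_eq: "S = - \<Union>{U \<in> \<B>. U \<subseteq> - S}" if S: "closed S" for S
  proof -
    obtain \<U> where "\<U> \<subseteq> \<B>" "- S = \<Union>\<U>" using basis[OF open_Compl[OF S]] by blast
    then have "- S \<subseteq> \<Union>{U \<in> \<B>. U \<subseteq> - S}" by blast
    moreover have "\<Union>{U \<in> \<B>. U \<subseteq> - S} \<subseteq> - S" by blast
    ultimately have "- S = \<Union>{U \<in> \<B>. U \<subseteq> - S}" by (rule subset_antisym)
    then show ?thesis by (metis double_compl)
  qed
  have "inj_on code {S. closed S}"
  proof (rule inj_onI)
    fix S T assume "S \<in> {S. closed S}" "T \<in> {S. closed S}" "code S = code T"
    moreover have "{U \<in> \<B>. U \<subseteq> - S} \<subseteq> \<B>" "{U \<in> \<B>. U \<subseteq> - T} \<subseteq> \<B>" by auto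
    ultimately have same: "{U \<in> \<B>. U \<subseteq> - S} = {U \<in> \<B>. U \<subseteq> - T}"
      by (simp add: code_def inj_on_image_eq_iff[OF inj_on_to_nat_on[OF \<open>countable \<B>\<close>]])
    have "S = - \<Union>{U \<in> \<B>. U \<subseteq> - S}"
      using \<open>S \<in> _\<close> by (intro closed_eq) simp
    also have "\<dots> = - \<Union>{U \<in> \<B>. U \<subseteq> - T}"
      by (simp only: same)
    also have "\<dots> = T"
      using \<open>T \<in> _\<close> by (intro sym[OF closed_eq]) simp
    finally show "S = T" .
  qed
  moreover have "code ` {S. closed S} \<subseteq> UNIV" by simp
  ultimately have "|{S :: 'a set. closed S}| \<le>o |UNIV :: nat set set|"
    by (intro card_of_ordLeq[THEN iffD1] exI conjI)
  also have "|UNIV :: nat set set| =o |UNIV :: real set|"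
    using nat_sets_eqpoll_reals eqpoll_iff_card_of_ordIso by blast
  finally show ?thesis .
qed

lemma card_UNIV_le_continuum:
  "|UNIV :: 'a::{second_countable_topology, t1_space} set| \<le>o |UNIV :: real set|"
proof -
  have "inj (\<lambda>x :: 'a. {x})" "range (\<lambda>x :: 'a. {x}) \<subseteq> {S. closed S}" by (auto simp: inj_def)
  then have "|UNIV :: 'a set| \<le>o |{S :: 'a set. closed S}|"
    by (intro card_of_ordLeq[THEN iffD1] exI conjI)
  then show ?thesis using card_closed_le_continuum by (rule ordLeq_transitive)
qed

lemma enumeration_positive_compacts:
  obtains \<sigma> :: "real \<Rightarrow> 'a::euclidean_space set \<times> real"
  where "range \<sigma> = {K. compact K \<and> 0 < emeasure lebesgue K} \<times> UNIV"
proof -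
  let ?P = "{K :: 'a set. compact K \<and> 0 < emeasure lebesgue K}"
  have "|?P| \<le>o |{S :: 'a set. closed S}|"
    by (rule card_of_mono1) (auto intro: compact_imp_closed)
  then have "|?P| \<le>o |UNIV :: real set|"
    using card_closed_le_continuum by (rule ordLeq_transitive)
  then have "|?P \<times> (UNIV :: real set)| \<le>o |(UNIV :: real set) \<times> (UNIV :: real set)|"
    by (rule card_of_Times_mono1)
  also have "|(UNIV :: real set) \<times> (UNIV :: real set)| =o |UNIV :: real set|"
    by (rule card_of_Times_same_infinite) (simp add: infinite_UNIV_char_0)
  finally have card: "|?P \<times> (UNIV :: real set)| \<le>o |UNIV :: real set|" .
  have "cbox 0 One \<in> ?P"
    by (simp add: emeasure_lebesgue_unit_cube)
  then have "?P \<times> (UNIV :: real set) \<noteq> {}" by blast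
  then obtain \<sigma> :: "real \<Rightarrow> 'a set \<times> real" where "range \<sigma> = ?P \<times> UNIV"
    using card_of_ordLeq2[THEN iffD2, OF _ card] by blast
  then show ?thesis by (rule that)
qed

lemma (in regular_continuum) colouring_hitting_positive_compacts:
  fixes e :: "'a::euclidean_space" and Z :: "real \<Rightarrow> 'a set"
  assumes e: "e \<noteq> 0" and small_Z: "\<And>\<beta>. small (Z \<beta>)" and disj: "disjoint_family Z"
  obtains col :: "'a::euclidean_space \<Rightarrow> real" where "\<And>\<beta>. inj_on col (Z \<beta>)"
    and "\<And>y. col (y + e) \<noteq> col y"
    and "\<And>K \<xi>. compact K \<Longrightarrow> 0 < emeasure lebesgue K \<Longrightarrow> \<exists>y\<in>K. col y = \<xi>"
proof -
  obtain \<sigma> :: "real \<Rightarrow> 'a set \<times> real"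
    where \<sigma>: "range \<sigma> = {K. compact K \<and> 0 < emeasure lebesgue K} \<times> UNIV"
    using enumeration_positive_compacts by blast
  then have large: "\<not> small (fst (\<sigma> i))" for i
    using compact_positive_measure_not_small
    by (metis (no_types, lifting) SigmaE fst_conv mem_Collect_eq rangeI)
  obtain col :: "'a \<Rightarrow> real" where inj: "\<And>\<beta>. inj_on col (Z \<beta>)"
    and shift: "\<And>y. col (y + e) \<noteq> col y" and meets: "\<And>i. \<exists>y\<in>fst (\<sigma> i). col y = snd (\<sigma> i)"
    using colouring_injective_on_zones[where Z = Z and S = "\<lambda>i. fst (\<sigma> i)" and c = "\<lambda>i. snd (\<sigma> i)",
        OF e card_UNIV_le_continuum small_Z disj large] by blast
  have "\<exists>y\<in>K. col y = \<xi>" if "compact K" "0 < emeasure lebesgue K" for K \<xi>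
    using meets \<sigma> that by (metis (no_types, lifting) SigmaI UNIV_I fst_conv imageE mem_Collect_eq snd_conv)
  then show ?thesis using that[of col] inj shift by blast
qed

section \<open>Colour classes\<close>

lemma not_two_covering_colour_class:
  fixes col :: "'a::ab_group_add \<Rightarrow> 'b"
  assumes "e \<noteq> 0" and "\<And>y. col (y + e) \<noteq> col y"
  shows "\<not> two_covering {y. col y = \<xi>}"
proof
  assume "two_covering {y. col y = \<xi>}"
  moreover have "card {0, e} = 2" using assms(1) by simp
  ultimately obtain t where "(\<lambda>c. c + t) ` {0, e} \<subseteq> {y. col y = \<xi>}"
    unfolding two_covering_def by blast
  then have "col t = \<xi>" "col (t + e) = \<xi>" by (auto simp: add.commute)
  then show False using assms(2) by metis
qed

lemma lt_S_covering_colour_classes: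
  fixes col :: "'a::ab_group_add \<Rightarrow> 'b" and Z :: "'c \<Rightarrow> 'a set"
  assumes absorb: "\<And>F. small F \<Longrightarrow> \<exists>\<beta> t. (\<lambda>f. f + t) ` F \<subseteq> Z \<beta>"
    and inj: "\<And>\<beta>. inj_on col (Z \<beta>)"
  shows "lt_S_covering (range (\<lambda>\<xi>. {y. col y = \<xi>})) |UNIV :: real set|"
  unfolding lt_S_covering_def
proof (intro conjI allI impI)
  fix F :: "'a set"
  assume "|F| <o |UNIV :: real set|"
  then obtain \<beta> t where into: "(\<lambda>f. f + t) ` F \<subseteq> Z \<beta>"
    using absorb unfolding small_def by blast
  show "\<exists>t. (\<lambda>f. f + t) ` F \<subseteq> \<Union> (range (\<lambda>\<xi>. {y. col y = \<xi>}))
      \<and> (\<forall>A\<in>range (\<lambda>\<xi>. {y. col y = \<xi>}). \<forall>a\<in>(\<lambda>f. f + t) ` F \<inter> A. \<forall>b\<in>(\<lambda>f. f + t) ` F \<inter> A. a = b)"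
  proof (intro exI[of _ t] conjI ballI)
    show "(\<lambda>f. f + t) ` F \<subseteq> \<Union> (range (\<lambda>\<xi>. {y. col y = \<xi>}))" by blast
  next
    fix A a b
    assume "A \<in> range (\<lambda>\<xi>. {y. col y = \<xi>})"
      and a: "a \<in> (\<lambda>f. f + t) ` F \<inter> A" and b: "b \<in> (\<lambda>f. f + t) ` F \<inter> A"
    then obtain \<xi> where "A = {y. col y = \<xi>}" by blast
    then have "col a = col b" using a b by simp
    moreover have "a \<in> Z \<beta>" "b \<in> Z \<beta>" using a b into by blast+
    ultimately show "a = b" by (rule inj_onD[OF inj])
  qed
qed auto

theorem mainTheorem14:
  assumes "martins_axiom" and "continuum_is_aleph2"
  shows "\<exists>B :: real \<Rightarrow> (real ^ 'n) set.
           (\<forall>\<xi> \<eta>. \<xi> \<noteq> \<eta> \<longrightarrow> B \<xi> \<inter> B \<eta> = {})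
         \<and> (\<forall>\<xi>. inner_lebesgue (B \<xi>) = 0 \<and> inner_lebesgue (UNIV - B \<xi>) = 0)
         \<and> (\<forall>\<xi>. \<not> two_covering (B \<xi>))
         \<and> lt_S_covering (range B) (card_of (UNIV :: real set))"
proof -
  interpret regular_continuum using assms(2) by (rule regular_continuum_if_aleph2)
  obtain Z :: "real \<Rightarrow> (real^'n) set" where small_Z: "\<And>\<beta>. small (Z \<beta>)" and disj: "disjoint_family Z"
    and absorb: "\<And>F. small F \<Longrightarrow> \<exists>\<beta> t. (\<lambda>f. f + t) ` F \<subseteq> Z \<beta>"
    using translation_zones[OF card_UNIV_le_continuum not_small_UNIV] by blast
  have one: "(1 :: real^'n) \<noteq> 0" by (simp add: vec_eq_iff)
  obtain col :: "real^'n \<Rightarrow> real" where inj: "\<And>\<beta>. inj_on col (Z \<beta>)"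
    and shift: "\<And>y. col (y + 1) \<noteq> col y"
    and hits: "\<And>K \<xi>. compact K \<Longrightarrow> 0 < emeasure lebesgue K \<Longrightarrow> \<exists>y\<in>K. col y = \<xi>"
    using colouring_hitting_positive_compacts[OF one small_Z disj] by blast
  define B where "B \<xi> = {y. col y = \<xi>}" for \<xi>
  have "lt_S_covering (range B) |UNIV :: real set|"
    unfolding B_def using absorb inj by (rule lt_S_covering_colour_classes)
  moreover have "inner_lebesgue (B \<xi>) = 0" for \<xi>
    using hits[where \<xi> = "\<xi> + 1"] by (intro inner_lebesgue_eq_0I) (fastforce simp: B_def)
  moreover have "inner_lebesgue (UNIV - B \<xi>) = 0" for \<xi>
    using hits[where \<xi> = \<xi>] by (intro inner_lebesgue_eq_0I) (fastforce simp: B_def)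
  moreover have "\<not> two_covering (B \<xi>)" for \<xi>
    unfolding B_def using one shift by (rule not_two_covering_colour_class)
  ultimately show ?thesis by (intro exI[of _ B]) (auto simp: B_def)
qed

end
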